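(* Let $T>0$ and $\alpha_1,\alpha_2\ge0$ with $\alpha_1+\alpha_2=1$. Consider problem (P2): maximize $r$ over $(r,r_1,r_2,x,p_1,p_2)$, where $x:[0,T]\to\mathbb{R}$ is an arbitrary (measurable) trajectory with no speed constraint, subject to $r_k\ge\alpha_k r$ for $k=1,2$, $(r_1,r_2)\in\mathcal{C}(x,p)$, $p_1(t)+p_2(t)\le\bar P$ and $p_k(t)\ge0$ for all $t$. Then an optimal solution of (P2) is: $x^*(t)=-D/2$, $p_1^*(t)=\bar P$, $p_2^*(t)=0$ for $t\in[0,\alpha_1T)$, and $x^*(t)=D/2$, $p_2^*(t)=\bar P$, $p_1^*(t)=0$ for $t\in[\alpha_1T,T]$. The corresponding optimal rate pair is $r_1^*=\alpha_1\log_2\left(1+\frac{\bar P\beta_0}{H^2}\right)$, $r_2^*=\alpha_2\log_2\left(1+\frac{\bar P\beta_0}{H^2}\right)$.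
   Context: Fix $D>0$, $H>0$, $\beta_0>0$, $\bar P>0$. Ground users GU 1, GU 2 are at horizontal positions $x_1=-D/2$, $x_2=D/2$; for UAV position $x\in\mathbb{R}$ (constant altitude $H$), $h_k(x)=\beta_0/((x-x_k)^2+H^2)$. A power allocation is a pair of measurable functions $p_1,p_2:[0,T]\to[0,\infty)$. $\mathcal{C}(x,p)$ is the set of $(r_1,r_2)$, $r_1,r_2\ge0$, with $r_1\le\frac1T\int_0^T\log_2(1+p_1(t)h_1(x(t)))dt$, $r_2\le\frac1T\int_0^T\log_2(1+p_2(t)h_2(x(t)))dt$, $r_1+r_2\le\frac1T\int_0^T\log_2(1+p_1(t)h_1(x(t))+p_2(t)h_2(x(t)))dt$. *)

theory Defs
  imports "HOL-Analysis.Analysis"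
begin

text \<open>Channel gain from a UAV at horizontal position x (altitude H) to a ground user at xk.\<close>
definition chan_gain :: "real \<Rightarrow> real \<Rightarrow> real \<Rightarrow> real \<Rightarrow> real" where
  "chan_gain \<beta>0 H xk x = \<beta>0 / ((x - xk)\<^sup>2 + H\<^sup>2)"

text \<open>Capacity region C(x,p) over horizon [0,T]; GU1 at -D/2, GU2 at D/2.\<close>
definition cap_region ::
  "real \<Rightarrow> real \<Rightarrow> real \<Rightarrow> real \<Rightarrow> (real \<Rightarrow> real) \<Rightarrow> (real \<Rightarrow> real) \<Rightarrow> (real \<Rightarrow> real)
   \<Rightarrow> (real \<times> real) set" where
  "cap_region D H \<beta>0 T x p1 p2 =
     {(r1, r2). r1 \<ge> 0 \<and> r2 \<ge> 0 \<and>
        r1 \<le> (1 / T) * (LINT t:{0..T}|lborel. log 2 (1 + p1 t * chan_gain \<beta>0 H (- D / 2) (x t))) \<and>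
        r2 \<le> (1 / T) * (LINT t:{0..T}|lborel. log 2 (1 + p2 t * chan_gain \<beta>0 H (D / 2) (x t))) \<and>
        r1 + r2 \<le> (1 / T) * (LINT t:{0..T}|lborel.
            log 2 (1 + p1 t * chan_gain \<beta>0 H (- D / 2) (x t) + p2 t * chan_gain \<beta>0 H (D / 2) (x t)))}"

definition feasible_P2 ::
  "real \<Rightarrow> real \<Rightarrow> real \<Rightarrow> real \<Rightarrow> real \<Rightarrow> real \<Rightarrow> real \<Rightarrow>
   real \<Rightarrow> real \<Rightarrow> real \<Rightarrow> (real \<Rightarrow> real) \<Rightarrow> (real \<Rightarrow> real) \<Rightarrow> (real \<Rightarrow> real) \<Rightarrow> bool" where
  "feasible_P2 D H \<beta>0 Pbar T \<alpha>1 \<alpha>2 r r1 r2 x p1 p2 \<longleftrightarrow>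
     x \<in> borel_measurable (restrict_space lborel {0..T}) \<and>
     p1 \<in> borel_measurable (restrict_space lborel {0..T}) \<and>
     p2 \<in> borel_measurable (restrict_space lborel {0..T}) \<and>
     r1 \<ge> \<alpha>1 * r \<and> r2 \<ge> \<alpha>2 * r \<and>
     (r1, r2) \<in> cap_region D H \<beta>0 T x p1 p2 \<and>
     (\<forall>t\<in>{0..T}. p1 t \<ge> 0 \<and> p2 t \<ge> 0 \<and> p1 t + p2 t \<le> Pbar)"

end

theory Submission
  imports Defs
begin

text \<open>Every channel gain is at most \<open>\<beta>0 / H\<^sup>2\<close>, so at every instant the sum rate is at most
  \<open>log 2 (1 + Pbar \<beta>0 / H\<^sup>2)\<close>, and hence so is \<open>r = \<alpha>1 r + \<alpha>2 r \<le> r1 + r2\<close>. With no speed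
  constraint the UAV can hover exactly above GU 1 for a fraction \<open>\<alpha>1\<close> of the time and above GU 2
  for the rest, serving each with full power; this time sharing attains the bound.\<close>

lemma measurable_step_function:
  fixes a b c T :: real
  shows "(\<lambda>t::real. if t < a then b else c) \<in> borel_measurable (restrict_space lborel {0..T})"
  by (rule measurable_restrict_space1) measurable

lemma set_integral_step_function:
  fixes a b c T :: real
  assumes "0 \<le> a" "a \<le> T"
  shows "(LINT t:{0..T}|lborel. (if t < a then b else c)) = b * a + c * (T - a)"
proof -
  have "(\<lambda>t. indicator {0..T} t *\<^sub>R (if t < a then b else c))
      = (\<lambda>t. b * indicator {0..<a} t + c * indicator {a..T} t)"
    using assms by (auto simp: indicator_def fun_eq_iff)
  then show ?thesis
    using assms by (simp add: set_lebesgue_integral_def)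
qed

lemma set_integral_le_const_Icc:
  fixes f :: "real \<Rightarrow> real" and a b c :: real
  assumes "a \<le> b" "0 \<le> c" "\<And>t. t \<in> {a..b} \<Longrightarrow> f t \<le> c"
  shows "(LINT t:{a..b}|lborel. f t) \<le> c * (b - a)"
proof (cases "set_integrable lborel {a..b} f")
  case True
  have "set_integrable lborel {a..b} (\<lambda>t. c)"
    using assms by (simp add: set_integrable_def integrable_indicator_iff emeasure_lborel_Icc)
  with True have "(LINT t:{a..b}|lborel. f t) \<le> (LINT t:{a..b}|lborel. c)"
    using assms(3) by (rule set_integral_mono)
  also have "\<dots> = c * (b - a)"
    using assms by (simp add: set_lebesgue_integral_def)
  finally show ?thesis .
next
  case False
  then have "(LINT t:{a..b}|lborel. f t) = 0"
    by (simp add: set_lebesgue_integral_def set_integrable_def not_integrable_integral_eq)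
  then show ?thesis
    using assms by simp
qed

lemma chan_gain_nonneg: "0 \<le> \<beta>0 \<Longrightarrow> 0 \<le> chan_gain \<beta>0 H xk x"
  unfolding chan_gain_def by simp

lemma chan_gain_le:
  assumes "H \<noteq> 0" "0 \<le> \<beta>0"
  shows "chan_gain \<beta>0 H xk x \<le> \<beta>0 / H\<^sup>2"
  unfolding chan_gain_def using assms
  by (intro divide_left_mono) (auto intro!: mult_pos_pos add_nonneg_pos)

lemma chan_gain_self: "chan_gain \<beta>0 H xk xk = \<beta>0 / H\<^sup>2"
  by (simp add: chan_gain_def)

lemma log_one_plus_nonneg:
  fixes y :: real
  assumes "0 \<le> y"
  shows "0 \<le> log 2 (1 + y)"
  using assms by simp

lemma log_sum_rate_le:
  fixes p1 p2 g1 g2 g Pbar :: real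
  assumes "0 \<le> p1" "0 \<le> p2" "p1 + p2 \<le> Pbar"
    and "0 \<le> g1" "g1 \<le> g" "0 \<le> g2" "g2 \<le> g"
  shows "log 2 (1 + p1 * g1 + p2 * g2) \<le> log 2 (1 + Pbar * g)"
proof -
  have "p1 * g1 + p2 * g2 \<le> (p1 + p2) * g"
    using assms by (simp add: distrib_right add_mono mult_left_mono)
  also have "\<dots> \<le> Pbar * g"
    using assms by (intro mult_right_mono) auto
  finally have "1 + p1 * g1 + p2 * g2 \<le> 1 + Pbar * g"
    by linarith
  moreover have "0 < 1 + p1 * g1 + p2 * g2"
    using assms by (simp add: add_pos_nonneg)
  ultimately show ?thesis
    by simp
qed

lemma feasible_P2_rate_le:
  assumes "H > 0" "\<beta>0 \<ge> 0" "Pbar \<ge> 0" "T > 0" "\<alpha>1 + \<alpha>2 = 1"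
    and "feasible_P2 D H \<beta>0 Pbar T \<alpha>1 \<alpha>2 r r1 r2 x p1 p2"
  shows "r \<le> log 2 (1 + Pbar * \<beta>0 / H\<^sup>2)"
proof -
  let ?rs = "log 2 (1 + Pbar * \<beta>0 / H\<^sup>2)"
  let ?sum_rate = "\<lambda>t. log 2 (1 + p1 t * chan_gain \<beta>0 H (- D / 2) (x t)
                                + p2 t * chan_gain \<beta>0 H (D / 2) (x t))"
  from assms(6) have weights: "\<alpha>1 * r \<le> r1" "\<alpha>2 * r \<le> r2"
    and power: "\<forall>t\<in>{0..T}. p1 t \<ge> 0 \<and> p2 t \<ge> 0 \<and> p1 t + p2 t \<le> Pbar"
    and sum_le: "r1 + r2 \<le> (1 / T) * (LINT t:{0..T}|lborel. ?sum_rate t)"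
    unfolding feasible_P2_def cap_region_def by auto
  have "?sum_rate t \<le> ?rs" if "t \<in> {0..T}" for t
    using log_sum_rate_le[of "p1 t" "p2 t" Pbar, OF _ _ _ chan_gain_nonneg chan_gain_le
        chan_gain_nonneg chan_gain_le] power that assms(1,2)
    by (simp add: times_divide_eq_right)
  moreover have "0 \<le> ?rs"
    using assms(2,3) by (intro log_one_plus_nonneg) simp
  ultimately have "(LINT t:{0..T}|lborel. ?sum_rate t) \<le> ?rs * T"
    using set_integral_le_const_Icc[of 0 T ?rs ?sum_rate] assms(4) by simp
  with sum_le assms(4) have "T * (r1 + r2) \<le> T * ?rs"
    by (simp add: field_simps)
  with assms(4) have "r1 + r2 \<le> ?rs"
    by (simp add: mult_le_cancel_left_pos)
  moreover have "r = \<alpha>1 * r + \<alpha>2 * r"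
    using assms(5) by (metis distrib_right mult_1)
  ultimately show ?thesis
    using weights by linarith
qed

lemma feasible_P2_time_sharing:
  assumes "H > 0" "\<beta>0 \<ge> 0" "Pbar \<ge> 0" "T > 0"
    and "\<alpha>1 \<ge> 0" "\<alpha>2 \<ge> 0" "\<alpha>1 + \<alpha>2 = 1"
  shows "feasible_P2 D H \<beta>0 Pbar T \<alpha>1 \<alpha>2 (log 2 (1 + Pbar * \<beta>0 / H\<^sup>2))
           (\<alpha>1 * log 2 (1 + Pbar * \<beta>0 / H\<^sup>2)) (\<alpha>2 * log 2 (1 + Pbar * \<beta>0 / H\<^sup>2))
           (\<lambda>t. if t < \<alpha>1 * T then - D / 2 else D / 2)
           (\<lambda>t. if t < \<alpha>1 * T then Pbar else 0) (\<lambda>t. if t < \<alpha>1 * T then 0 else Pbar)"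
proof -
  let ?rs = "log 2 (1 + Pbar * \<beta>0 / H\<^sup>2)"
  let ?\<tau> = "\<alpha>1 * T"
  have switch: "0 \<le> ?\<tau>" "?\<tau> \<le> T"
    using assms by (auto simp: mult_le_cancel_right1)
  have rs_nonneg: "0 \<le> ?rs"
    using assms(2,3) by (intro log_one_plus_nonneg) simp
  have T_minus_switch: "T - ?\<tau> = \<alpha>2 * T"
    using assms(7) by (metis add_diff_cancel_left' left_diff_distrib mult_1)
  have rate1: "(\<lambda>t. log 2 (1 + (if t < ?\<tau> then Pbar else 0)
                * chan_gain \<beta>0 H (- D / 2) (if t < ?\<tau> then - D / 2 else D / 2)))
             = (\<lambda>t. if t < ?\<tau> then ?rs else 0)"
    and rate2: "(\<lambda>t. log 2 (1 + (if t < ?\<tau> then 0 else Pbar)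
                * chan_gain \<beta>0 H (D / 2) (if t < ?\<tau> then - D / 2 else D / 2)))
             = (\<lambda>t. if t < ?\<tau> then 0 else ?rs)"
    and rate_sum: "(\<lambda>t. log 2 (1 + (if t < ?\<tau> then Pbar else 0)
                * chan_gain \<beta>0 H (- D / 2) (if t < ?\<tau> then - D / 2 else D / 2)
              + (if t < ?\<tau> then 0 else Pbar)
                * chan_gain \<beta>0 H (D / 2) (if t < ?\<tau> then - D / 2 else D / 2)))
             = (\<lambda>t. ?rs)"
    by (auto simp: fun_eq_iff chan_gain_self)
  have rates_split: "\<alpha>1 * ?rs + \<alpha>2 * ?rs = ?rs"
    using assms(7) by (metis distrib_right mult_1)
  have "(LINT t:{0..T}|lborel. ?rs) = ?rs * T"
    using assms(4) by (simp add: set_lebesgue_integral_def)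
  then show ?thesis
    unfolding feasible_P2_def cap_region_def rate1 rate2 rate_sum
    using assms switch rs_nonneg rates_split
    by (simp add: measurable_step_function set_integral_step_function T_minus_switch
        algebra_simps mult_left_le_one_le)
qed

theorem lemma4:
  fixes D H \<beta>0 Pbar T \<alpha>1 \<alpha>2 :: real
  assumes "D > 0" "H > 0" "\<beta>0 > 0" "Pbar > 0" "T > 0"
    and "\<alpha>1 \<ge> 0" "\<alpha>2 \<ge> 0" "\<alpha>1 + \<alpha>2 = 1"
  defines "xs \<equiv> (\<lambda>t::real. if t < \<alpha>1 * T then - D / 2 else D / 2)"
    and "p1s \<equiv> (\<lambda>t::real. if t < \<alpha>1 * T then Pbar else 0)"
    and "p2s \<equiv> (\<lambda>t::real. if t < \<alpha>1 * T then 0 else Pbar)"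
    and "rs \<equiv> log 2 (1 + Pbar * \<beta>0 / H\<^sup>2)"
    and "r1s \<equiv> \<alpha>1 * log 2 (1 + Pbar * \<beta>0 / H\<^sup>2)"
    and "r2s \<equiv> \<alpha>2 * log 2 (1 + Pbar * \<beta>0 / H\<^sup>2)"
  shows "feasible_P2 D H \<beta>0 Pbar T \<alpha>1 \<alpha>2 rs r1s r2s xs p1s p2s \<and>
         (\<forall>r r1 r2 x p1 p2. feasible_P2 D H \<beta>0 Pbar T \<alpha>1 \<alpha>2 r r1 r2 x p1 p2 \<longrightarrow> r \<le> rs)"
  using feasible_P2_time_sharing[of H \<beta>0 Pbar T \<alpha>1 \<alpha>2 D]
    feasible_P2_rate_le[of H \<beta>0 Pbar T \<alpha>1 \<alpha>2 D]
    assms(2-8)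
  unfolding xs_def p1s_def p2s_def rs_def r1s_def r2s_def
  by auto

end
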